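(* For any two cylindric partitions $\alpha,\beta$ on $\mathcal C_{k,n}$ and variable sets $\mathbf x=(x_a)_{a\in A}$, $\mathbf y=(y_a)_{a\in A}$, \[ \sum_{\substack{\mu\in\operatorname{Cylpar};\\ \mu\subseteq\alpha;\ \mu\subseteq\beta}} s_{\alpha/\mu}(\mathbf x)\,s_{\beta/\mu}(\mathbf y)=\sum_{\substack{\lambda\in\operatorname{Cylpar};\\ \alpha\subseteq\lambda;\ \beta\subseteq\lambda}} s_{\lambda/\beta}(\mathbf x)\,s_{\lambda/\alpha}(\mathbf y). \]
   Context: Fix integers $n>k\ge 1$. A cylindric partition is a weakly decreasing sequence $(\lambda_m)_{m\in\mathbb Z}$ of integers with $\lambda_m=\lambda_{m+k}+n-k$ for all $m$; $\operatorname{Cylpar}$ is the set of cylindric partitions. A point $(x,y)\in\mathbb Z^2$ lies in $\lambda$ if $y\le\lambda_x$. A box is an equivalence class of points modulo translation by integer multiples of $(-k,n-k)$; $\pi$ is the projection; a box lies in $\lambda$ iff its representatives do. $\mu\subseteq\lambda$ means $\mu_m\le\lambda_m$ for all $m$; the boxes of $\lambda/\mu$ are the (finitely many) boxes in $\lambda$ not in $\mu$. Fix a totally ordered alphabet $A$. A semistandard cylindric tableau of shape $\lambda/\mu$ is a map $R$ from the boxes of $\lambda/\mu$ to $A$ such that $R(\pi(x,y_1))\le R(\pi(x,y_2))$ whenever the points $(x,y_1),(x,y_2)$ lie in $\lambda$ but not in $\mu$ and $y_1<y_2$, and $R(\pi(x_1,y))<R(\pi(x_2,y))$ whenever $(x_1,y),(x_2,y)$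 lie in $\lambda$ but not $\mu$ and $x_1<x_2$. $\operatorname{SSCT}(\lambda/\mu)$ is the set of these. For a variable set $\mathbf x=(x_a)_{a\in A}$ (distinct commuting indeterminates), $\mathbf x^{\operatorname{wt}(R)}=\prod_{B}x_{R(B)}$ over the boxes $B$ of $\lambda/\mu$, and the cylindric Schur function is $s_{\lambda/\mu}(\mathbf x)=\sum_{R\in\operatorname{SSCT}(\lambda/\mu)}\mathbf x^{\operatorname{wt}(R)}$. The identity is an identity of formal power series in $\mathbf x,\mathbf y$. *)

theory Defs
  imports Main "HOL-Library.FuncSet"
begin

definition cylpar :: "int \<Rightarrow> int \<Rightarrow> (int \<Rightarrow> int) set" where
  "cylpar k n = {lam. (\<forall>m. lam (m + 1) \<le> lam m) \<and> (\<forall>m. lam m = lam (m + k) + (n - k))}"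

definition in_cp :: "(int \<Rightarrow> int) \<Rightarrow> int \<times> int \<Rightarrow> bool" where
  "in_cp lam p \<longleftrightarrow> snd p \<le> lam (fst p)"

text \<open>The box (projection pi) of a point: its class modulo translation by
  integer multiples of (-k, n-k).\<close>
definition cbox :: "int \<Rightarrow> int \<Rightarrow> int \<times> int \<Rightarrow> (int \<times> int) set" where
  "cbox k n p = {(fst p - j * k, snd p + j * (n - k)) | j. True}"

definition skew_boxes :: "int \<Rightarrow> int \<Rightarrow> (int \<Rightarrow> int) \<Rightarrow> (int \<Rightarrow> int) \<Rightarrow> (int \<times> int) set set" where
  "skew_boxes k n lam mu = cbox k n ` {p. in_cp lam p \<and> \<not> in_cp mu p}"

definition ssct :: "int \<Rightarrow> int \<Rightarrow> (int \<Rightarrow> int) \<Rightarrow> (int \<Rightarrow> int) \<Rightarrow> ((int \<times> int) set \<Rightarrow> 'a::linorder) set" where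
  "ssct k n lam mu = {R. R \<in> extensional (skew_boxes k n lam mu) \<and>
     (\<forall>x y1 y2. in_cp lam (x, y1) \<and> \<not> in_cp mu (x, y1) \<and> in_cp lam (x, y2) \<and> \<not> in_cp mu (x, y2)
        \<and> y1 < y2 \<longrightarrow> R (cbox k n (x, y1)) \<le> R (cbox k n (x, y2))) \<and>
     (\<forall>x1 x2 y. in_cp lam (x1, y) \<and> \<not> in_cp mu (x1, y) \<and> in_cp lam (x2, y) \<and> \<not> in_cp mu (x2, y)
        \<and> x1 < x2 \<longrightarrow> R (cbox k n (x1, y)) < R (cbox k n (x2, y)))}"

definition tab_wt :: "int \<Rightarrow> int \<Rightarrow> (int \<Rightarrow> int) \<Rightarrow> (int \<Rightarrow> int) \<Rightarrow> ((int \<times> int) set \<Rightarrow> 'a) \<Rightarrow> 'a \<Rightarrow> nat" where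
  "tab_wt k n lam mu R a = card {B \<in> skew_boxes k n lam mu. R B = a}"

text \<open>Cylindric Schur function s_{lam/mu}, as a formal power series given by its
  coefficient function: the coefficient of the monomial with exponent vector e.\<close>
definition cyl_schur :: "int \<Rightarrow> int \<Rightarrow> (int \<Rightarrow> int) \<Rightarrow> (int \<Rightarrow> int) \<Rightarrow> ('a::linorder \<Rightarrow> nat) \<Rightarrow> nat" where
  "cyl_schur k n lam mu e = card {R \<in> ssct k n lam mu. tab_wt k n lam mu R = e}"

end

(*
  Extracting the coefficient of x^e y^f, the identity says that the kernels
  s_e(lam, mu) = [x^e] s_{lam/mu} commute:
    sum_mu s_e(alpha, mu) s_f(beta, mu) = sum_lam s_e(lam, beta) s_f(lam, alpha).
  Removing the boxes that carry the largest letter of a tableau leaves a tableau with one letter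
  less, and the removed boxes form a strip. So s_e is the composite of a strip kernel with s_e',
  where e' forgets the largest letter. Commutation relations of this kind are stable under
  composition, hence induction on the number of letters reduces the identity to the commutation
  of two strip kernels, which is witnessed by an explicit reflection bijection.
*)
theory Submission
  imports Defs "HOL-Library.Groups_Big_Fun"
begin

section \<open>Finitely supported sums and commuting kernels\<close>

lemma Sum_any_mult_left:
  fixes g :: "'i \<Rightarrow> 'b::{comm_semiring_0,semiring_no_zero_divisors}"
  shows "(\<Sum>x. c * g x) = c * Sum_any g"
proof (cases "c = 0")
  case False
  then have "{x. c * g x \<noteq> 0} = {x. g x \<noteq> 0}" by auto
  then show ?thesis by (simp add: Sum_any.expand_set sum_distrib_left)
qed simp

lemma Sum_any_swap_bounded:
  assumes "finite A" "finite B" "\<And>x y. g x y \<noteq> 0 \<Longrightarrow> x \<in> A \<and> y \<in> B"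
  shows "(\<Sum>x. \<Sum>y. g x y) = (\<Sum>y. \<Sum>x. g x y)"
  by (rule Sum_any.swap[of "A \<times> B"]) (use assms in auto)

lemma Sum_any_eq_card_support:
  assumes "\<And>x. g x \<le> (1::nat)"
  shows "Sum_any g = card {x. g x \<noteq> 0}"
proof -
  have "g x = 1" if "g x \<noteq> 0" for x using assms[of x] that by linarith
  then show ?thesis by (simp add: Sum_any.expand_set card_eq_sum)
qed

lemma Sum_any_eq_single:
  assumes "\<And>x. x \<noteq> c \<Longrightarrow> g x = 0"
  shows "Sum_any g = g c"
  using Sum_any.expand_superset[of "{c}" g] assms by fastforce

lemma finite_support_induct_Max [consumes 1, case_names zero remove_Max]:
  fixes e :: "'a::linorder \<Rightarrow> 'b::zero"
  assumes "finite {a. e a \<noteq> 0}"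
    and "P (\<lambda>_. 0)"
    and "\<And>e. finite {a. e a \<noteq> 0} \<Longrightarrow> {a. e a \<noteq> 0} \<noteq> {}
           \<Longrightarrow> P (e(Max {a. e a \<noteq> 0} := 0)) \<Longrightarrow> P e"
  shows "P e"
  using assms(1)
proof (induction "card {a. e a \<noteq> 0}" arbitrary: e rule: less_induct)
  case less
  show ?case
  proof (cases "{a. e a \<noteq> 0} = {}")
    case True
    then have "e = (\<lambda>_. 0)" by auto
    then show ?thesis using assms(2) by simp
  next
    case False
    define m where "m = Max {a. e a \<noteq> 0}"
    have "m \<in> {a. e a \<noteq> 0}" unfolding m_def using less.prems False by (rule Max_in)
    moreover have supp: "{a. (e(m := 0)) a \<noteq> 0} = {a. e a \<noteq> 0} - {m}" by auto
    ultimately have "card {a. (e(m := 0)) a \<noteq> 0} < card {a. e a \<noteq> 0}"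
      unfolding supp using less.prems by (simp only: card_Diff1_less)
    then have "P (e(m := 0))" using less.hyps less.prems supp by simp
    then show ?thesis using assms(3) less.prems False unfolding m_def by blast
  qed
qed

lemma sum_max_plus_sum_min:
  "(\<Sum>x\<in>A. max (a x) (b x)) + (\<Sum>x\<in>A. min (a x) (b x)) = sum a A + sum b A"
  for a b :: "'i \<Rightarrow> 'b::linordered_ab_group_add"
  unfolding sum.distrib[symmetric] by (rule sum.cong) (auto simp: max_def min_def add.commute)

definition kernel_comp ::
  "('i \<Rightarrow> 'i \<Rightarrow> 'b::comm_semiring_0) \<Rightarrow> ('i \<Rightarrow> 'i \<Rightarrow> 'b) \<Rightarrow> 'i \<Rightarrow> 'i \<Rightarrow> 'b" where
  "kernel_comp K L x z = (\<Sum>y. K x y * L y z)"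

definition kernels_commute :: "('i \<Rightarrow> 'i \<Rightarrow> 'b::comm_semiring_0) \<Rightarrow> ('i \<Rightarrow> 'i \<Rightarrow> 'b) \<Rightarrow> bool" where
  "kernels_commute K L \<longleftrightarrow> (\<forall>a b. (\<Sum>m. K a m * L b m) = (\<Sum>l. K l b * L l a))"

definition locally_finite_kernel :: "('i \<Rightarrow> 'i \<Rightarrow> 'b::zero) \<Rightarrow> bool" where
  "locally_finite_kernel K \<longleftrightarrow> (\<forall>x. finite {y. K x y \<noteq> 0}) \<and> (\<forall>y. finite {x. K x y \<noteq> 0})"

lemma kernels_commute_sym:
  "kernels_commute K L \<Longrightarrow> kernels_commute L K"
  unfolding kernels_commute_def by (metis (no_types, lifting) Sum_any.cong mult.commute)

lemma kernels_commute_diag: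
  fixes K :: "'i \<Rightarrow> 'i \<Rightarrow> 'b::comm_semiring_1"
  assumes "\<And>x y. K x y \<noteq> 0 \<Longrightarrow> x \<in> D \<and> y \<in> D"
  shows "kernels_commute K (\<lambda>x y. if x \<in> D \<and> y = x then 1 else 0)"
  unfolding kernels_commute_def
proof (intro allI)
  fix a b
  have "(\<Sum>m. K a m * (if b \<in> D \<and> m = b then 1 else 0)) = (if b \<in> D then K a b else 0)"
    by (subst Sum_any_eq_single[of b]) auto
  also have "\<dots> = (if a \<in> D then K a b else 0)" using assms[of a b] by auto
  also have "\<dots> = (\<Sum>l. K l b * (if l \<in> D \<and> a = l then 1 else 0))"
    by (subst Sum_any_eq_single[of a]) auto
  finally show "(\<Sum>m. K a m * (if b \<in> D \<and> m = b then 1 else 0))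
      = (\<Sum>l. K l b * (if l \<in> D \<and> a = l then 1 else 0))" .
qed

lemma kernels_commute_comp:
  fixes K L1 L2 :: "'i \<Rightarrow> 'i \<Rightarrow> 'b::{comm_semiring_0,semiring_no_zero_divisors}"
  assumes "kernels_commute K L1" "kernels_commute K L2"
    and K: "locally_finite_kernel K" and L1: "locally_finite_kernel L1"
    and L2: "locally_finite_kernel L2"
  shows "kernels_commute K (kernel_comp L1 L2)"
  unfolding kernels_commute_def kernel_comp_def
proof (intro allI)
  fix a b
  have K_row: "finite {m. K a m \<noteq> 0}" and K_col: "finite {r. K r b \<noteq> 0}"
    and L1_row: "finite {n. L1 b n \<noteq> 0}" and L2_col: "finite {t. L2 t a \<noteq> 0}"
    using K L1 L2 unfolding locally_finite_kernel_def by blast+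
  have "(\<Sum>m. K a m * (\<Sum>n. L1 b n * L2 n m)) = (\<Sum>m. \<Sum>n. L1 b n * (K a m * L2 n m))"
    by (simp add: Sum_any_mult_left[symmetric] mult_ac)
  also have "\<dots> = (\<Sum>n. \<Sum>m. L1 b n * (K a m * L2 n m))"
    by (rule Sum_any_swap_bounded[OF K_row L1_row]) auto
  also have "\<dots> = (\<Sum>n. L1 b n * (\<Sum>t. K t n * L2 t a))"
    using assms(2) by (simp add: Sum_any_mult_left kernels_commute_def)
  also have "\<dots> = (\<Sum>n. \<Sum>t. L2 t a * (K t n * L1 b n))"
    by (simp add: Sum_any_mult_left[symmetric] mult_ac)
  also have "\<dots> = (\<Sum>t. \<Sum>n. L2 t a * (K t n * L1 b n))"
    by (rule Sum_any_swap_bounded[OF L1_row L2_col]) auto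
  also have "\<dots> = (\<Sum>t. L2 t a * (\<Sum>r. K r b * L1 r t))"
    using assms(1) by (simp add: Sum_any_mult_left kernels_commute_def)
  also have "\<dots> = (\<Sum>t. \<Sum>r. K r b * (L1 r t * L2 t a))"
    by (simp add: Sum_any_mult_left[symmetric] mult_ac)
  also have "\<dots> = (\<Sum>r. \<Sum>t. K r b * (L1 r t * L2 t a))"
    by (rule Sum_any_swap_bounded[OF L2_col K_col]) auto
  also have "\<dots> = (\<Sum>r. K r b * (\<Sum>t. L1 r t * L2 t a))"
    by (simp add: Sum_any_mult_left)
  finally show "(\<Sum>m. K a m * (\<Sum>n. L1 b n * L2 n m)) = (\<Sum>r. K r b * (\<Sum>t. L1 r t * L2 t a))" .
qed

section \<open>Cylindric partitions and their boxes\<close>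

locale cylindric =
  fixes k n :: int
  assumes k_pos: "1 \<le> k"
begin

abbreviation Cyl where "Cyl \<equiv> cylpar k n"
abbreviation box where "box \<equiv> cbox k n"
abbreviation boxes where "boxes \<equiv> skew_boxes k n"

lemma cylparI:
  "(\<And>x. lam (x + 1) \<le> lam x) \<Longrightarrow> (\<And>x. lam (x + k) = lam x - (n - k)) \<Longrightarrow> lam \<in> Cyl"
  unfolding cylpar_def by simp

lemma cylpar_step: "lam \<in> Cyl \<Longrightarrow> lam (x + 1) \<le> lam x"
  unfolding cylpar_def by blast

lemma cylpar_period:
  assumes "lam \<in> Cyl" shows "lam (x + k) = lam x - (n - k)"
proof -
  have "lam x = lam (x + k) + (n - k)" using assms unfolding cylpar_def by blast
  then show ?thesis by linarith
qed

lemma cylpar_antimono: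
  assumes "lam \<in> Cyl" "x \<le> z" shows "lam z \<le> lam x"
  using assms(2)
proof (induction z rule: int_ge_induct)
  case (step z)
  then show ?case using cylpar_step[OF assms(1), of z] by linarith
qed simp

lemma cylpar_shift:
  assumes "lam \<in> Cyl" shows "lam (x + j * k) = lam x - j * (n - k)"
proof (induction j rule: int_induct[where k = 0])
  case (step1 j)
  then show ?case using cylpar_period[OF assms, of "x + j * k"] by (simp add: algebra_simps)
next
  case (step2 j)
  then show ?case using cylpar_period[OF assms, of "x + (j - 1) * k"] by (simp add: algebra_simps)
qed simp

lemma cylpar_eqI:
  assumes "lam \<in> Cyl" "mu \<in> Cyl" "\<And>x. 0 \<le> x \<Longrightarrow> x < k \<Longrightarrow> lam x = mu x"
  shows "lam = mu"
proof
  fix x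
  have "lam (x mod k) = mu (x mod k)" using assms(3) k_pos by simp
  then show "lam x = mu x"
    using cylpar_shift[OF assms(1), of "x mod k" "x div k"] cylpar_shift[OF assms(2), of "x mod k" "x div k"]
    by (simp only: mod_div_mult_eq)
qed

lemma cbox_eqD: "box p = box q \<Longrightarrow> \<exists>j. q = (fst p - j * k, snd p + j * (n - k))"
proof -
  assume "box p = box q"
  moreover have "q \<in> box q" unfolding cbox_def by (auto intro!: exI[of _ 0])
  ultimately show ?thesis unfolding cbox_def by auto
qed

lemma cbox_shift: "box (x - j * k, y + j * (n - k)) = box (x, y)"
proof (intro set_eqI iffI)
  fix p
  assume "p \<in> box (x - j * k, y + j * (n - k))"
  then obtain i where "p = (x - j * k - i * k, y + j * (n - k) + i * (n - k))"
    unfolding cbox_def by auto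
  then have "p = (x - (i + j) * k, y + (i + j) * (n - k))" by (simp add: algebra_simps)
  then show "p \<in> box (x, y)" unfolding cbox_def by auto
next
  fix p
  assume "p \<in> box (x, y)"
  then obtain i where "p = (x - i * k, y + i * (n - k))" unfolding cbox_def by auto
  then have "p = (x - j * k - (i - j) * k, y + j * (n - k) + (i - j) * (n - k))"
    by (simp add: algebra_simps)
  then show "p \<in> box (x - j * k, y + j * (n - k))" unfolding cbox_def by fastforce
qed

lemma in_cp_shift:
  assumes "lam \<in> Cyl" shows "in_cp lam (x - j * k, y + j * (n - k)) \<longleftrightarrow> in_cp lam (x, y)"
  using cylpar_shift[OF assms, of x "-j"] unfolding in_cp_def by simp

lemma box_mem_boxes_iff:
  assumes "lam \<in> Cyl" "mu \<in> Cyl"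
  shows "box (x, y) \<in> boxes lam mu \<longleftrightarrow> mu x < y \<and> y \<le> lam x"
proof
  assume "box (x, y) \<in> boxes lam mu"
  then obtain q where q: "in_cp lam q" "\<not> in_cp mu q" "box (x, y) = box q"
    unfolding skew_boxes_def by auto
  then obtain j where "q = (x - j * k, y + j * (n - k))" using cbox_eqD[of "(x, y)" q] by auto
  then show "mu x < y \<and> y \<le> lam x" using q in_cp_shift assms unfolding in_cp_def by auto
qed (auto simp: skew_boxes_def in_cp_def)

lemma boxes_cases:
  assumes "b \<in> boxes lam mu"
  obtains x y where "b = box (x, y)" "mu x < y" "y \<le> lam x"
  using assms unfolding skew_boxes_def in_cp_def by auto

definition skew_size :: "(int \<Rightarrow> int) \<Rightarrow> (int \<Rightarrow> int) \<Rightarrow> int" where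
  "skew_size lam mu = (\<Sum>x\<in>{0..<k}. lam x - mu x)"

lemma skew_size_ge:
  assumes "mu \<le> lam" "0 \<le> x" "x < k" shows "lam x - mu x \<le> skew_size lam mu"
  unfolding skew_size_def
  by (rule member_le_sum[where f = "\<lambda>x. lam x - mu x"]) (use assms in \<open>auto simp: le_fun_def\<close>)

lemma boxes_eq_image_fundamental:
  assumes "lam \<in> Cyl" "mu \<in> Cyl"
  shows "boxes lam mu = box ` (SIGMA x:{0..<k}. {mu x<..lam x})"
proof (intro equalityI subsetI)
  fix b assume b_mem: "b \<in> boxes lam mu"
  then obtain x y where b: "b = box (x, y)" "mu x < y" "y \<le> lam x" by (rule boxes_cases)
  define j where "j = x div k"
  have "x - j * k = x mod k" unfolding j_def by (rule minus_div_mult_eq_mod)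
  then have eq: "box (x mod k, y + j * (n - k)) = b"
    using cbox_shift[of x j y] b(1) by simp
  from b_mem have "box (x mod k, y + j * (n - k)) \<in> boxes lam mu" by (simp only: eq)
  then have "(x mod k, y + j * (n - k)) \<in> (SIGMA x:{0..<k}. {mu x<..lam x})"
    using box_mem_boxes_iff[OF assms] k_pos by simp
  then show "b \<in> box ` (SIGMA x:{0..<k}. {mu x<..lam x})" using eq by blast
next
  fix b assume "b \<in> box ` (SIGMA x:{0..<k}. {mu x<..lam x})"
  then obtain x y where "b = box (x, y)" "mu x < y" "y \<le> lam x" by auto
  then show "b \<in> boxes lam mu" using box_mem_boxes_iff[OF assms] by simp
qed

lemma inj_on_box_fundamental: "inj_on box (SIGMA x:{0..<k}. {mu x<..lam x})"
proof
  fix p q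
  assume p: "p \<in> (SIGMA x:{0..<k}. {mu x<..lam x})" and q: "q \<in> (SIGMA x:{0..<k}. {mu x<..lam x})"
    and "box p = box q"
  then obtain j where j: "q = (fst p - j * k, snd p + j * (n - k))" using cbox_eqD by blast
  have "0 \<le> fst p" "fst p < k" "0 \<le> fst p - j * k" "fst p - j * k < k" using p q j by auto
  then have "j * k < 1 * k" "-1 * k < j * k" by linarith+
  then have "j < 1" "-1 < j" using k_pos by (simp_all only: mult_less_cancel_right)
  then have "j = 0" by simp
  then show "p = q" using j by simp
qed

lemma finite_boxes: "lam \<in> Cyl \<Longrightarrow> mu \<in> Cyl \<Longrightarrow> finite (boxes lam mu)"
  by (simp add: boxes_eq_image_fundamental)

lemma card_boxes:
  assumes "lam \<in> Cyl" "mu \<in> Cyl" "mu \<le> lam"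
  shows "int (card (boxes lam mu)) = skew_size lam mu"
proof -
  have "card (boxes lam mu) = (\<Sum>x\<in>{0..<k}. nat (lam x - mu x))"
    by (simp add: boxes_eq_image_fundamental[OF assms(1,2)] card_image[OF inj_on_box_fundamental])
  then show ?thesis using assms(3) unfolding skew_size_def by (simp add: le_fun_def)
qed

lemma boxes_split:
  assumes "lam \<in> Cyl" "mu \<in> Cyl" "nu \<in> Cyl" "mu \<le> nu" "nu \<le> lam"
  shows "boxes lam mu = boxes nu mu \<union> boxes lam nu" "boxes nu mu \<inter> boxes lam nu = {}"
proof -
  have "in_cp nu p" if "in_cp mu p" for p
    using that assms(4) order_trans unfolding in_cp_def le_fun_def by blast
  moreover have "in_cp lam p" if "in_cp nu p" for p
    using that assms(5) order_trans unfolding in_cp_def le_fun_def by blast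
  ultimately show "boxes lam mu = boxes nu mu \<union> boxes lam nu" unfolding skew_boxes_def by blast
  show "boxes nu mu \<inter> boxes lam nu = {}"
  proof (intro equals0I)
    fix b assume b: "b \<in> boxes nu mu \<inter> boxes lam nu"
    then obtain x y where xy: "b = box (x, y)" "y \<le> nu x" by (blast elim: boxes_cases)
    with b have "box (x, y) \<in> boxes lam nu" by simp
    with xy(2) show False using box_mem_boxes_iff[OF assms(1,3)] by simp
  qed
qed

lemma finite_cylpar_window:
  "finite {lam \<in> Cyl. \<forall>x\<in>{0..<k}. lo x \<le> lam x \<and> lam x \<le> hi x}" (is "finite ?W")
proof -
  have "inj_on (\<lambda>lam. restrict lam {0..<k}) ?W"
  proof
    fix lam mu assume "lam \<in> ?W" "mu \<in> ?W" and eq: "restrict lam {0..<k} = restrict mu {0..<k}"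
    show "lam = mu"
    proof (rule cylpar_eqI)
      fix x :: int assume "0 \<le> x" "x < k"
      then show "lam x = mu x" using fun_cong[OF eq, of x] by simp
    qed (use \<open>lam \<in> ?W\<close> \<open>mu \<in> ?W\<close> in auto)
  qed
  moreover have "(\<lambda>lam. restrict lam {0..<k}) ` ?W \<subseteq> PiE {0..<k} (\<lambda>x. {lo x..hi x})" by auto
  moreover have "finite (PiE {0..<k} (\<lambda>x. {lo x..hi x}))" by (simp add: finite_PiE)
  ultimately show ?thesis using finite_imageD finite_subset by blast
qed

lemma finite_cylpar_below: "finite {mu. mu \<in> Cyl \<and> mu \<le> a \<and> skew_size a mu = d}"
proof (rule finite_subset[OF _ finite_cylpar_window[of "\<lambda>x. a x - d" a]])
  show "{mu. mu \<in> Cyl \<and> mu \<le> a \<and> skew_size a mu = d}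
      \<subseteq> {mu \<in> Cyl. \<forall>x\<in>{0..<k}. a x - d \<le> mu x \<and> mu x \<le> a x}"
    using skew_size_ge by (fastforce simp: le_fun_def)
qed

lemma finite_cylpar_above: "finite {lam. lam \<in> Cyl \<and> a \<le> lam \<and> skew_size lam a = d}"
proof (rule finite_subset[OF _ finite_cylpar_window[of a "\<lambda>x. a x + d"]])
  show "{lam. lam \<in> Cyl \<and> a \<le> lam \<and> skew_size lam a = d}
      \<subseteq> {lam \<in> Cyl. \<forall>x\<in>{0..<k}. a x \<le> lam x \<and> lam x \<le> a x + d}"
    using skew_size_ge by (fastforce simp: le_fun_def)
qed

section \<open>Tableaux and the coefficient kernel\<close>

definition tableaux ::
  "(int \<Rightarrow> int) \<Rightarrow> (int \<Rightarrow> int) \<Rightarrow> ('a::linorder \<Rightarrow> nat) \<Rightarrow> ((int \<times> int) set \<Rightarrow> 'a) set" where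
  "tableaux lam mu e = {R \<in> ssct k n lam mu. tab_wt k n lam mu R = e}"

lemma ssct_extensional: "R \<in> ssct k n lam mu \<Longrightarrow> R \<in> extensional (boxes lam mu)"
  by (simp add: ssct_def)

lemma ssct_colD:
  "R \<in> ssct k n lam mu \<Longrightarrow> mu x < y1 \<Longrightarrow> y1 < y2 \<Longrightarrow> y2 \<le> lam x
   \<Longrightarrow> R (box (x, y1)) \<le> R (box (x, y2))"
  unfolding ssct_def in_cp_def by auto

lemma ssct_rowD:
  "R \<in> ssct k n lam mu \<Longrightarrow> mu x1 < y \<Longrightarrow> y \<le> lam x1 \<Longrightarrow> mu x2 < y \<Longrightarrow> y \<le> lam x2
   \<Longrightarrow> x1 < x2 \<Longrightarrow> R (box (x1, y)) < R (box (x2, y))"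
  unfolding ssct_def in_cp_def by auto

lemma ssctI:
  assumes "R \<in> extensional (boxes lam mu)"
    and "\<And>x y1 y2. mu x < y1 \<Longrightarrow> y1 < y2 \<Longrightarrow> y2 \<le> lam x \<Longrightarrow> R (box (x, y1)) \<le> R (box (x, y2))"
    and "\<And>x1 x2 y. mu x1 < y \<Longrightarrow> y \<le> lam x1 \<Longrightarrow> mu x2 < y \<Longrightarrow> y \<le> lam x2
           \<Longrightarrow> x1 < x2 \<Longrightarrow> R (box (x1, y)) < R (box (x2, y))"
  shows "R \<in> ssct k n lam mu"
  unfolding ssct_def in_cp_def using assms by auto

lemma tableau_weight:
  "R \<in> tableaux lam mu e \<Longrightarrow> e a = card {b \<in> boxes lam mu. R b = a}"
  by (auto simp: tableaux_def tab_wt_def)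

lemma tableau_letters:
  assumes "lam \<in> Cyl" "mu \<in> Cyl" "R \<in> tableaux lam mu e"
  shows "{a. e a \<noteq> 0} = R ` boxes lam mu"
  using tableau_weight[OF assms(3)] finite_boxes[OF assms(1,2)] by (auto simp: card_eq_0_iff)

lemma card_boxes_eq_Sum_any:
  assumes "lam \<in> Cyl" "mu \<in> Cyl" "R \<in> tableaux lam mu e"
  shows "card (boxes lam mu) = Sum_any e"
proof -
  have fin: "finite (boxes lam mu)" using finite_boxes[OF assms(1,2)] .
  have "card (boxes lam mu) = (\<Sum>a\<in>R ` boxes lam mu. card {b \<in> boxes lam mu. R b = a})"
    using sum.image_gen[OF fin, of "\<lambda>_. 1::nat" R] by simp
  also have "\<dots> = Sum_any e"
    unfolding Sum_any.expand_set tableau_letters[OF assms, symmetric]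
    by (simp add: tableau_weight[OF assms(3)])
  finally show ?thesis .
qed

lemma finite_tableaux:
  assumes "lam \<in> Cyl" "mu \<in> Cyl" "finite {a. e a \<noteq> 0}"
  shows "finite (tableaux lam mu e)"
proof (rule finite_subset)
  show "tableaux lam mu e \<subseteq> PiE (boxes lam mu) (\<lambda>_. {a. e a \<noteq> 0})"
  proof
    fix R assume R: "R \<in> tableaux lam mu e"
    then have "R \<in> extensional (boxes lam mu)" by (simp add: tableaux_def ssct_extensional)
    then show "R \<in> PiE (boxes lam mu) (\<lambda>_. {a. e a \<noteq> 0})"
      using tableau_letters[OF assms(1,2) R] by (auto simp: PiE_def)
  qed
  show "finite (PiE (boxes lam mu) (\<lambda>_. {a. e a \<noteq> 0}))"
    using finite_boxes[OF assms(1,2)] assms(3) by (simp add: finite_PiE)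
qed

definition schur :: "('a::linorder \<Rightarrow> nat) \<Rightarrow> (int \<Rightarrow> int) \<Rightarrow> (int \<Rightarrow> int) \<Rightarrow> nat" where
  "schur e lam mu = (if lam \<in> Cyl \<and> mu \<in> Cyl \<and> mu \<le> lam then card (tableaux lam mu e) else 0)"

lemma schur_nonzeroD:
  assumes "schur e lam mu \<noteq> 0"
  shows "lam \<in> Cyl" "mu \<in> Cyl" "mu \<le> lam" "skew_size lam mu = int (Sum_any e)"
    "finite {a. e a \<noteq> 0}"
proof -
  show C: "lam \<in> Cyl" "mu \<in> Cyl" "mu \<le> lam" using assms by (auto simp: schur_def split: if_splits)
  have "tableaux lam mu e \<noteq> {}" using assms by (auto simp: schur_def split: if_splits)
  then obtain R where R: "R \<in> tableaux lam mu e" by blast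
  show "skew_size lam mu = int (Sum_any e)"
    using card_boxes[OF C] card_boxes_eq_Sum_any[OF C(1,2) R] by simp
  show "finite {a. e a \<noteq> 0}"
    using tableau_letters[OF C(1,2) R] finite_boxes[OF C(1,2)] by simp
qed

lemma locally_finite_schur: "locally_finite_kernel (schur e)"
  unfolding locally_finite_kernel_def
proof (intro conjI allI)
  fix lam mu
  show "finite {mu. schur e lam mu \<noteq> 0}"
    by (rule finite_subset[OF _ finite_cylpar_below[of lam "int (Sum_any e)"]])
      (use schur_nonzeroD in blast)
  show "finite {lam. schur e lam mu \<noteq> 0}"
    by (rule finite_subset[OF _ finite_cylpar_above[of mu "int (Sum_any e)"]])
      (use schur_nonzeroD in blast)
qed

lemma tableaux_empty_shape:
  assumes "lam \<in> Cyl" shows "tableaux lam lam (\<lambda>_::'a::linorder. 0) = {\<lambda>_. undefined}"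
proof -
  have "boxes lam lam = {}" by (simp add: skew_boxes_def)
  then show ?thesis
    by (auto intro!: ssctI dest!: ssct_extensional
        simp: tableaux_def tab_wt_def box_mem_boxes_iff[OF assms assms])
qed

lemma schur_zero_weight:
  "schur (\<lambda>_::'a::linorder. 0) lam mu = (if lam \<in> Cyl \<and> mu = lam then 1 else 0)"
proof (cases "schur (\<lambda>_::'a. 0) lam mu = 0")
  case False
  note C = schur_nonzeroD[OF False]
  have "lam x = mu x" if "0 \<le> x" "x < k" for x
    using skew_size_ge[OF C(3) that] C(3,4) by (simp add: le_fun_def order_antisym)
  then have "mu = lam" using cylpar_eqI[OF C(1,2)] by simp
  then show ?thesis using C by (simp add: schur_def tableaux_empty_shape)
qed (auto simp: schur_def tableaux_empty_shape)

section \<open>Strips and their commutation\<close>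

lemma sum_shift_periodic:
  fixes g :: "int \<Rightarrow> int"
  assumes "\<And>x. g (x + k) = g x"
  shows "(\<Sum>x\<in>{0..<k}. g (x + 1)) = sum g {0..<k}"
proof -
  have "(\<Sum>x\<in>{0..<k}. g (x + 1)) = sum g ((\<lambda>x. x + 1) ` {0..<k})"
    by (subst sum.reindex) (auto simp: inj_on_def)
  also have "(\<lambda>x. x + 1) ` {0..<k} = {1..<k + 1}" by simp
  also have "{1..<k + 1} = insert k {0..<k} - {0}" using k_pos by auto
  finally show ?thesis using k_pos assms[of 0] by (simp add: sum_diff1)
qed

text \<open>At most one box of lam/nu lies on each line y = const: these are the shapes that a single
  letter can fill.\<close>
definition is_strip :: "(int \<Rightarrow> int) \<Rightarrow> (int \<Rightarrow> int) \<Rightarrow> bool" where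
  "is_strip lam nu \<longleftrightarrow> nu \<le> lam \<and> (\<forall>x. lam (x + 1) \<le> nu x)"

definition strip :: "nat \<Rightarrow> (int \<Rightarrow> int) \<Rightarrow> (int \<Rightarrow> int) \<Rightarrow> nat" where
  "strip p lam nu = (if lam \<in> Cyl \<and> nu \<in> Cyl \<and> is_strip lam nu \<and> skew_size lam nu = int p then 1 else 0)"

definition strip_bases :: "(int \<Rightarrow> int) \<Rightarrow> (int \<Rightarrow> int) \<Rightarrow> nat \<Rightarrow> (int \<Rightarrow> int) set" where
  "strip_bases lam mu p = {nu \<in> Cyl. is_strip lam nu \<and> skew_size lam nu = int p \<and> mu \<le> nu}"

lemma finite_strip_bases: "finite (strip_bases lam mu p)"
  by (rule finite_subset[OF _ finite_cylpar_below[of lam "int p"]])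
    (auto simp: strip_bases_def is_strip_def)

lemma locally_finite_strip: "locally_finite_kernel (strip p)"
  unfolding locally_finite_kernel_def
proof (intro conjI allI)
  fix lam nu
  show "finite {nu. strip p lam nu \<noteq> 0}"
    by (rule finite_subset[OF _ finite_cylpar_below[of lam "int p"]])
      (auto simp: strip_def is_strip_def split: if_splits)
  show "finite {lam. strip p lam nu \<noteq> 0}"
    by (rule finite_subset[OF _ finite_cylpar_above[of nu "int p"]])
      (auto simp: strip_def is_strip_def split: if_splits)
qed

text \<open>For strips a/mu and b/mu, mu x ranges over the interval [max a b (x + 1), min a b x].
  Reflecting mu x in it and shifting by one column gives lam x in [max a b x, min a b (x - 1)],
  that is, strips lam/a and lam/b.\<close>
definition strip_swap :: "(int \<Rightarrow> int) \<Rightarrow> (int \<Rightarrow> int) \<Rightarrow> (int \<Rightarrow> int) \<Rightarrow> int \<Rightarrow> int" where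
  "strip_swap a b mu x = max (a x) (b x) + min (a (x - 1)) (b (x - 1)) - mu (x - 1)"

definition strip_unswap :: "(int \<Rightarrow> int) \<Rightarrow> (int \<Rightarrow> int) \<Rightarrow> (int \<Rightarrow> int) \<Rightarrow> int \<Rightarrow> int" where
  "strip_unswap a b lam x = max (a (x + 1)) (b (x + 1)) + min (a x) (b x) - lam (x + 1)"

lemma strip_unswap_swap: "strip_unswap a b (strip_swap a b mu) = mu"
  by (simp add: fun_eq_iff strip_swap_def strip_unswap_def)

lemma strip_swap_unswap: "strip_swap a b (strip_unswap a b lam) = lam"
  by (simp add: fun_eq_iff strip_swap_def strip_unswap_def)

lemma strip_swap_mem:
  assumes "a \<in> Cyl" "b \<in> Cyl" "mu \<in> Cyl" "is_strip a mu" "is_strip b mu"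
  defines "lam \<equiv> strip_swap a b mu"
  shows "lam \<in> Cyl" "is_strip lam a" "is_strip lam b"
    "sum lam {0..<k} = sum a {0..<k} + sum b {0..<k} - sum mu {0..<k}"
proof -
  have below: "mu x \<le> min (a x) (b x)" and above: "max (a (x + 1)) (b (x + 1)) \<le> mu x" for x
    using assms(4,5) unfolding is_strip_def le_fun_def by auto
  have lam_ge: "max (a x) (b x) \<le> lam x" for x
    using below[of "x - 1"] by (simp add: lam_def strip_swap_def max_def min_def)
  have lam_le: "lam (x + 1) \<le> min (a x) (b x)" for x
    using above[of x] by (simp add: lam_def strip_swap_def max_def min_def)
  have period: "lam (x + k) = lam x - (n - k)" for x
  proof -
    have "x + k - 1 = (x - 1) + k" by simp
    then have "lam (x + k)
        = max (a (x + k)) (b (x + k)) + min (a (x - 1 + k)) (b (x - 1 + k)) - mu (x - 1 + k)"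
      by (simp only: lam_def strip_swap_def)
    also have "\<dots> = lam x - (n - k)"
      by (simp only: cylpar_period[OF assms(1)] cylpar_period[OF assms(2)] cylpar_period[OF assms(3)])
        (simp add: lam_def strip_swap_def max_def min_def)
    finally show ?thesis .
  qed
  have "lam (x + 1) \<le> lam x" for x
    using lam_le[of x] lam_ge[of x] min.cobounded1[of "a x" "b x"] max.cobounded1[of "a x" "b x"]
    by linarith
  then show "lam \<in> Cyl" using period by (rule cylparI)
  show "is_strip lam a" "is_strip lam b"
    unfolding is_strip_def le_fun_def using lam_ge lam_le by auto
  let ?g = "\<lambda>x. min (a x) (b x) - mu x"
  have per: "?g (x + k) = ?g x" for x
    using cylpar_period[OF assms(1)] cylpar_period[OF assms(2)] cylpar_period[OF assms(3)] by simp
  have "(\<Sum>x\<in>{0..<k}. ?g (x + 1 - 1)) = (\<Sum>x\<in>{0..<k}. ?g (x - 1))"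
  proof (rule sum_shift_periodic)
    fix x show "?g (x + k - 1) = ?g (x - 1)" using per[of "x - 1"] by (simp only: diff_add_eq)
  qed
  then have "(\<Sum>x\<in>{0..<k}. ?g (x - 1)) = sum ?g {0..<k}" by simp
  moreover note sum_max_plus_sum_min[of a b "{0..<k}"]
  ultimately show "sum lam {0..<k} = sum a {0..<k} + sum b {0..<k} - sum mu {0..<k}"
    unfolding lam_def strip_swap_def by (simp add: sum.distrib sum_subtractf)
qed

lemma strip_unswap_mem:
  assumes "a \<in> Cyl" "b \<in> Cyl" "lam \<in> Cyl" "is_strip lam a" "is_strip lam b"
  defines "mu \<equiv> strip_unswap a b lam"
  shows "mu \<in> Cyl" "is_strip a mu" "is_strip b mu"
    "sum mu {0..<k} = sum a {0..<k} + sum b {0..<k} - sum lam {0..<k}"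
proof -
  have above: "max (a x) (b x) \<le> lam x" and below: "lam (x + 1) \<le> min (a x) (b x)" for x
    using assms(4,5) unfolding is_strip_def le_fun_def by auto
  have mu_le: "mu x \<le> min (a x) (b x)" for x
    using above[of "x + 1"] by (simp add: mu_def strip_unswap_def max_def min_def)
  have mu_ge: "max (a (x + 1)) (b (x + 1)) \<le> mu x" for x
    using below[of x] by (simp add: mu_def strip_unswap_def max_def min_def)
  have period: "mu (x + k) = mu x - (n - k)" for x
  proof -
    have "x + k + 1 = (x + 1) + k" by simp
    then have "mu (x + k)
        = max (a (x + 1 + k)) (b (x + 1 + k)) + min (a (x + k)) (b (x + k)) - lam (x + 1 + k)"
      by (simp only: mu_def strip_unswap_def)
    also have "\<dots> = mu x - (n - k)"
      by (simp only: cylpar_period[OF assms(1)] cylpar_period[OF assms(2)] cylpar_period[OF assms(3)])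
        (simp add: mu_def strip_unswap_def max_def min_def)
    finally show ?thesis .
  qed
  have "mu (x + 1) \<le> mu x" for x
    using mu_le[of "x + 1"] mu_ge[of x] min.cobounded1[of "a (x + 1)" "b (x + 1)"]
      max.cobounded1[of "a (x + 1)" "b (x + 1)"]
    by linarith
  then show "mu \<in> Cyl" using period by (rule cylparI)
  show "is_strip a mu" "is_strip b mu"
    unfolding is_strip_def le_fun_def using mu_le mu_ge by auto
  let ?g = "\<lambda>x. max (a x) (b x) - lam x"
  have "?g (x + k) = ?g x" for x
    using cylpar_period[OF assms(1)] cylpar_period[OF assms(2)] cylpar_period[OF assms(3)] by simp
  then have "(\<Sum>x\<in>{0..<k}. ?g (x + 1)) = sum ?g {0..<k}" by (rule sum_shift_periodic)
  moreover note sum_max_plus_sum_min[of a b "{0..<k}"]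
  ultimately show "sum mu {0..<k} = sum a {0..<k} + sum b {0..<k} - sum lam {0..<k}"
    unfolding mu_def strip_unswap_def by (simp add: sum.distrib sum_subtractf)
qed

lemma kernels_commute_strip: "kernels_commute (strip p) (strip q)"
  unfolding kernels_commute_def
proof (intro allI)
  fix a b
  show "(\<Sum>mu. strip p a mu * strip q b mu) = (\<Sum>lam. strip p lam b * strip q lam a)"
  proof (cases "a \<in> Cyl \<and> b \<in> Cyl")
    case True
    then have C: "a \<in> Cyl" "b \<in> Cyl" by auto
    let ?A = "{mu. strip p a mu * strip q b mu \<noteq> 0}"
    let ?B = "{lam. strip p lam b * strip q lam a \<noteq> 0}"
    have size: "skew_size lam mu = sum lam {0..<k} - sum mu {0..<k}" for lam mu
      by (simp add: skew_size_def sum_subtractf)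
    have "bij_betw (strip_swap a b) ?A ?B"
    proof (rule bij_betw_byWitness[where f' = "strip_unswap a b"])
      show "strip_swap a b ` ?A \<subseteq> ?B"
        using strip_swap_mem[OF C] by (auto simp: strip_def size split: if_splits)
      show "strip_unswap a b ` ?B \<subseteq> ?A"
        using strip_unswap_mem[OF C] by (auto simp: strip_def size split: if_splits)
    qed (simp_all add: strip_unswap_swap strip_swap_unswap)
    then have "card ?A = card ?B" by (rule bij_betw_same_card)
    then show ?thesis by (simp add: Sum_any_eq_card_support strip_def)
  qed (auto simp: strip_def)
qed

section \<open>Removing and adding the largest letter\<close>

lemma int_eq_if_same_thresholds:
  fixes lo hi a b :: int
  assumes "lo \<le> a" "a \<le> hi" "lo \<le> b" "b \<le> hi"
    and "\<And>y. lo < y \<Longrightarrow> y \<le> hi \<Longrightarrow> y \<le> a \<longleftrightarrow> y \<le> b"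
  shows "a = b"
  using assms(5)[of a] assms(5)[of b] assms(1-4) by (cases "a = lo"; cases "b = lo") auto

text \<open>Below the largest letter m, column x of a tableau R holds smaller letters exactly up to
  height strip_base lam mu m R x, so the boxes containing m form lam/strip_base lam mu m R.\<close>
definition strip_base ::
  "(int \<Rightarrow> int) \<Rightarrow> (int \<Rightarrow> int) \<Rightarrow> 'a::linorder \<Rightarrow> ((int \<times> int) set \<Rightarrow> 'a) \<Rightarrow> int \<Rightarrow> int" where
  "strip_base lam mu m R x = Max (insert (mu x) {y. mu x < y \<and> y \<le> lam x \<and> R (box (x, y)) \<noteq> m})"

context
  fixes lam mu :: "int \<Rightarrow> int" and m :: "'a::linorder" and R
  assumes lam: "lam \<in> Cyl" and mu: "mu \<in> Cyl" and mu_le: "mu \<le> lam"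
    and R: "R \<in> ssct k n lam mu" and R_le: "\<forall>b\<in>boxes lam mu. R b \<le> m"
begin

lemma strip_base_bounds: "mu x \<le> strip_base lam mu m R x" "strip_base lam mu m R x \<le> lam x"
proof -
  have "finite {y. mu x < y \<and> y \<le> lam x \<and> R (box (x, y)) \<noteq> m}"
    by (rule finite_subset[of _ "{mu x<..lam x}"]) auto
  then show "mu x \<le> strip_base lam mu m R x" "strip_base lam mu m R x \<le> lam x"
    using mu_le by (auto simp: strip_base_def le_fun_def)
qed

lemma strip_base_threshold:
  assumes "mu x < y" "y \<le> lam x"
  shows "R (box (x, y)) \<noteq> m \<longleftrightarrow> y \<le> strip_base lam mu m R x"
proof -
  define Y where "Y = {y. mu x < y \<and> y \<le> lam x \<and> R (box (x, y)) \<noteq> m}"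
  have fin: "finite (insert (mu x) Y)"
    by (rule finite_insert[THEN iffD2], rule finite_subset[of _ "{mu x<..lam x}"]) (auto simp: Y_def)
  have base: "strip_base lam mu m R x = Max (insert (mu x) Y)" unfolding strip_base_def Y_def ..
  show ?thesis
  proof
    assume "R (box (x, y)) \<noteq> m"
    then have "y \<in> insert (mu x) Y" using assms by (simp add: Y_def)
    then show "y \<le> strip_base lam mu m R x" unfolding base using fin by simp
  next
    assume y_le: "y \<le> strip_base lam mu m R x"
    have "Max (insert (mu x) Y) \<in> insert (mu x) Y" using fin by (rule Max_in) simp
    moreover have "Max (insert (mu x) Y) \<noteq> mu x" using y_le assms(1) base by linarith
    ultimately obtain y' where y': "y' = strip_base lam mu m R x" "mu x < y'" "y' \<le> lam x"
      "R (box (x, y')) \<noteq> m"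
      unfolding base Y_def by auto
    have "R (box (x, y')) \<le> m" using R_le box_mem_boxes_iff[OF lam mu] y' by blast
    moreover have "R (box (x, y)) \<le> R (box (x, y'))" if "y < y'"
      using ssct_colD[OF R assms(1) that y'(3)] .
    ultimately show "R (box (x, y)) \<noteq> m" using y' y_le by (cases "y = y'") auto
  qed
qed

lemma strip_base_is_strip: "is_strip lam (strip_base lam mu m R)"
  unfolding is_strip_def le_fun_def
proof (intro conjI allI)
  fix x
  show "strip_base lam mu m R x \<le> lam x" by (rule strip_base_bounds)
  show "lam (x + 1) \<le> strip_base lam mu m R x"
  proof (rule ccontr)
    assume "\<not> lam (x + 1) \<le> strip_base lam mu m R x"
    then have y: "mu x < lam (x + 1)" "lam (x + 1) \<le> lam x" "mu (x + 1) < lam (x + 1)"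
      using strip_base_bounds[of x] cylpar_step[OF lam, of x] cylpar_step[OF mu, of x] by linarith+
    then have "R (box (x, lam (x + 1))) = m"
      using strip_base_threshold \<open>\<not> lam (x + 1) \<le> _\<close> by blast
    moreover have "R (box (x, lam (x + 1))) < R (box (x + 1, lam (x + 1)))"
      using ssct_rowD[OF R y(1,2,3)] by simp
    moreover have "R (box (x + 1, lam (x + 1))) \<le> m"
      using R_le box_mem_boxes_iff[OF lam mu] y(3) by blast
    ultimately show False by simp
  qed
qed

lemma strip_base_cylpar: "strip_base lam mu m R \<in> Cyl"
proof (rule cylparI)
  fix x
  show "strip_base lam mu m R (x + 1) \<le> strip_base lam mu m R x"
    using strip_base_is_strip unfolding is_strip_def le_fun_def by (meson order_trans)
  show "strip_base lam mu m R (x + k) = strip_base lam mu m R x - (n - k)"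
  proof (rule int_eq_if_same_thresholds[where lo = "mu (x + k)" and hi = "lam (x + k)"])
    have per: "mu (x + k) = mu x - (n - k)" "lam (x + k) = lam x - (n - k)"
      using cylpar_period lam mu by auto
    then show "mu (x + k) \<le> strip_base lam mu m R x - (n - k)"
      "strip_base lam mu m R x - (n - k) \<le> lam (x + k)"
      using strip_base_bounds[of x] by auto
    show "mu (x + k) \<le> strip_base lam mu m R (x + k)" "strip_base lam mu m R (x + k) \<le> lam (x + k)"
      by (rule strip_base_bounds)+
    fix y assume y: "mu (x + k) < y" "y \<le> lam (x + k)"
    have "box (x + k, y) = box (x, y + (n - k))"
      using cbox_shift[of "x + k" 1 "y"] by simp
    then show "y \<le> strip_base lam mu m R (x + k) \<longleftrightarrow> y \<le> strip_base lam mu m R x - (n - k)"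
      using strip_base_threshold[OF y] strip_base_threshold[of x "y + (n - k)"] y per by auto
  qed
qed

lemma strip_base_ge: "mu \<le> strip_base lam mu m R"
  using strip_base_bounds by (simp add: le_fun_def)

lemma boxes_largest_letter: "{b \<in> boxes lam mu. R b = m} = boxes lam (strip_base lam mu m R)"
proof (intro equalityI subsetI)
  fix b assume "b \<in> {b \<in> boxes lam mu. R b = m}"
  then obtain x y where b: "b = box (x, y)" "mu x < y" "y \<le> lam x" "R b = m"
    by (auto elim: boxes_cases)
  then have "strip_base lam mu m R x < y" using strip_base_threshold[of x y] by auto
  then show "b \<in> boxes lam (strip_base lam mu m R)"
    using b box_mem_boxes_iff[OF lam strip_base_cylpar] by auto
next
  fix b assume "b \<in> boxes lam (strip_base lam mu m R)"
  then obtain x y where "b = box (x, y)" "strip_base lam mu m R x < y" "y \<le> lam x"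
    by (rule boxes_cases)
  moreover have "mu x < y" using calculation strip_base_bounds[of x] by linarith
  ultimately show "b \<in> {b \<in> boxes lam mu. R b = m}"
    using strip_base_threshold[of x y] box_mem_boxes_iff[OF lam mu] by auto
qed

lemma boxes_strip_base_letters:
  "{b \<in> boxes (strip_base lam mu m R) mu. R b = a}
     = (if a = m then {} else {b \<in> boxes lam mu. R b = a})"
proof -
  have "b \<in> boxes (strip_base lam mu m R) mu \<longleftrightarrow> b \<in> boxes lam mu \<and> R b \<noteq> m" for b
  proof
    assume "b \<in> boxes (strip_base lam mu m R) mu"
    then obtain x y where "b = box (x, y)" "mu x < y" "y \<le> strip_base lam mu m R x" by (rule boxes_cases)
    then show "b \<in> boxes lam mu \<and> R b \<noteq> m"
      using strip_base_threshold strip_base_bounds[of x] box_mem_boxes_iff[OF lam mu] by auto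
  next
    assume "b \<in> boxes lam mu \<and> R b \<noteq> m"
    then obtain x y where "b = box (x, y)" "mu x < y" "y \<le> lam x" "R b \<noteq> m" by (auto elim: boxes_cases)
    then show "b \<in> boxes (strip_base lam mu m R) mu"
      using strip_base_threshold box_mem_boxes_iff[OF strip_base_cylpar mu] by auto
  qed
  then show ?thesis by auto
qed

lemma restrict_strip_base_ssct:
  "restrict R (boxes (strip_base lam mu m R) mu) \<in> ssct k n (strip_base lam mu m R) mu"
proof (rule ssctI)
  let ?nu = "strip_base lam mu m R"
  note mem = box_mem_boxes_iff[OF strip_base_cylpar mu]
  show "restrict R (boxes ?nu mu) \<in> extensional (boxes ?nu mu)" by simp
  fix x y1 y2 assume y: "mu x < y1" "y1 < y2" "y2 \<le> ?nu x"
  then show "restrict R (boxes ?nu mu) (box (x, y1)) \<le> restrict R (boxes ?nu mu) (box (x, y2))"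
    using ssct_colD[OF R y(1,2)] strip_base_bounds[of x] mem by auto
next
  let ?nu = "strip_base lam mu m R"
  note mem = box_mem_boxes_iff[OF strip_base_cylpar mu]
  fix x1 x2 y assume y: "mu x1 < y" "y \<le> ?nu x1" "mu x2 < y" "y \<le> ?nu x2" "x1 < x2"
  then show "restrict R (boxes ?nu mu) (box (x1, y)) < restrict R (boxes ?nu mu) (box (x2, y))"
    using ssct_rowD[OF R y(1) _ y(3) _ y(5)] strip_base_bounds[of x1] strip_base_bounds[of x2] mem
    by fastforce
qed

end

definition extend_tableau :: "(int \<Rightarrow> int) \<Rightarrow> (int \<Rightarrow> int) \<Rightarrow> (int \<Rightarrow> int) \<Rightarrow> 'a
    \<Rightarrow> ((int \<times> int) set \<Rightarrow> 'a) \<Rightarrow> (int \<times> int) set \<Rightarrow> 'a" where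
  "extend_tableau lam nu mu m R' b =
     (if b \<in> boxes nu mu then R' b else if b \<in> boxes lam nu then m else undefined)"

context
  fixes lam nu mu :: "int \<Rightarrow> int" and m :: "'a::linorder" and R'
  assumes lam: "lam \<in> Cyl" and nu: "nu \<in> Cyl" and mu: "mu \<in> Cyl"
    and mu_le: "mu \<le> nu" and strip: "is_strip lam nu"
    and R': "R' \<in> ssct k n nu mu" and R'_less: "\<forall>b\<in>boxes nu mu. R' b < m"
begin

lemma extend_tableau_inner: "mu x < y \<Longrightarrow> y \<le> nu x \<Longrightarrow>
    extend_tableau lam nu mu m R' (box (x, y)) = R' (box (x, y)) \<and> R' (box (x, y)) < m"
  using box_mem_boxes_iff[OF nu mu] R'_less by (simp add: extend_tableau_def)

lemma extend_tableau_outer: "nu x < y \<Longrightarrow> y \<le> lam x \<Longrightarrow>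
    extend_tableau lam nu mu m R' (box (x, y)) = m"
  using box_mem_boxes_iff[OF nu mu] box_mem_boxes_iff[OF lam nu] by (simp add: extend_tableau_def)

lemma extend_tableau_threshold:
  "mu x < y \<Longrightarrow> y \<le> lam x \<Longrightarrow> extend_tableau lam nu mu m R' (box (x, y)) \<noteq> m \<longleftrightarrow> y \<le> nu x"
  using extend_tableau_inner extend_tableau_outer by (cases "y \<le> nu x") fastforce+

lemma extend_tableau_ssct: "extend_tableau lam nu mu m R' \<in> ssct k n lam mu"
proof (rule ssctI)
  let ?R = "extend_tableau lam nu mu m R'"
  have nu_le: "nu \<le> lam" and strip_le: "\<And>x. lam (x + 1) \<le> nu x" using strip by (auto simp: is_strip_def)
  show "?R \<in> extensional (boxes lam mu)"
    using boxes_split(1)[OF lam mu nu mu_le nu_le] by (auto simp: extensional_def extend_tableau_def)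
  fix x y1 y2 assume y: "mu x < y1" "y1 < y2" "y2 \<le> lam x"
  show "?R (box (x, y1)) \<le> ?R (box (x, y2))"
  proof (cases "y2 \<le> nu x")
    case True
    then show ?thesis using extend_tableau_inner[of x y1] extend_tableau_inner[of x y2] y
      ssct_colD[OF R' y(1,2) True] by simp
  next
    case False
    then show ?thesis using extend_tableau_inner[of x y1] extend_tableau_outer y
      by (cases "y1 \<le> nu x") (auto simp: less_imp_le)
  qed
next
  let ?R = "extend_tableau lam nu mu m R'"
  have strip_le: "\<And>x. lam (x + 1) \<le> nu x" using strip by (auto simp: is_strip_def)
  fix x1 x2 y assume y: "mu x1 < y" "y \<le> lam x1" "mu x2 < y" "y \<le> lam x2" "x1 < x2"
  have "y \<le> nu x1"
    using cylpar_antimono[OF lam, of "x1 + 1" x2] strip_le[of x1] y by linarith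
  show "?R (box (x1, y)) < ?R (box (x2, y))"
  proof (cases "y \<le> nu x2")
    case True
    then show ?thesis using extend_tableau_inner[of x1 y] extend_tableau_inner[of x2 y] y \<open>y \<le> nu x1\<close>
      ssct_rowD[OF R' y(1) \<open>y \<le> nu x1\<close> y(3) True y(5)] by simp
  next
    case False
    then show ?thesis using extend_tableau_inner[of x1 y] extend_tableau_outer[of x2 y] y \<open>y \<le> nu x1\<close>
      by simp
  qed
qed

lemma extend_tableau_letters:
  "{b \<in> boxes lam mu. extend_tableau lam nu mu m R' b = a}
     = (if a = m then boxes lam nu else {b \<in> boxes nu mu. R' b = a})"
proof -
  have "nu \<le> lam" using strip by (simp add: is_strip_def)
  note split = boxes_split[OF lam mu nu mu_le this]
  show ?thesis using split R'_less by (auto simp: extend_tableau_def)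
qed

lemma extend_tableau_le: "\<forall>b\<in>boxes lam mu. extend_tableau lam nu mu m R' b \<le> m"
proof -
  have "nu \<le> lam" using strip by (simp add: is_strip_def)
  then show ?thesis using boxes_split(1)[OF lam mu nu mu_le] R'_less
    by (auto simp: extend_tableau_def less_imp_le)
qed

lemma restrict_extend_tableau: "restrict (extend_tableau lam nu mu m R') (boxes nu mu) = R'"
  using ssct_extensional[OF R'] by (auto simp: fun_eq_iff extend_tableau_def extensional_def)

lemma strip_base_extend_tableau: "strip_base lam mu m (extend_tableau lam nu mu m R') = nu"
proof
  fix x
  have "mu \<le> lam" using mu_le strip by (auto simp: is_strip_def intro: order_trans)
  note threshold = strip_base_threshold[OF lam mu this extend_tableau_ssct extend_tableau_le]
  note bounds = strip_base_bounds[OF lam mu \<open>mu \<le> lam\<close> extend_tableau_ssct extend_tableau_le]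
  show "strip_base lam mu m (extend_tableau lam nu mu m R') x = nu x"
  proof (rule int_eq_if_same_thresholds[where lo = "mu x" and hi = "lam x"])
    show "mu x \<le> nu x" "nu x \<le> lam x" using mu_le strip by (auto simp: le_fun_def is_strip_def)
    fix y assume "mu x < y" "y \<le> lam x"
    then show "y \<le> strip_base lam mu m (extend_tableau lam nu mu m R') x \<longleftrightarrow> y \<le> nu x"
      using threshold extend_tableau_threshold by blast
  qed (use bounds in auto)
qed

end

section \<open>The branching rule and the commutation of coefficient kernels\<close>

context
  fixes lam mu :: "int \<Rightarrow> int" and e e' :: "'a::linorder \<Rightarrow> nat" and m :: 'a
  assumes lam: "lam \<in> Cyl" and mu: "mu \<in> Cyl" and mu_le: "mu \<le> lam"
    and fin: "finite {a. e a \<noteq> 0}" and m: "m = Max {a. e a \<noteq> 0}" and e': "e' = e(m := 0)"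
begin

lemma tableau_le_Max:
  assumes "R \<in> tableaux lam mu e" shows "\<forall>b\<in>boxes lam mu. R b \<le> m"
  using tableau_letters[OF lam mu assms] fin unfolding m by auto

lemma tableau_less_Max:
  assumes "nu \<in> Cyl" "R' \<in> tableaux nu mu e'" shows "\<forall>b\<in>boxes nu mu. R' b < m"
proof
  fix b assume "b \<in> boxes nu mu"
  then have "e' (R' b) \<noteq> 0" using tableau_letters[OF assms(1) mu assms(2)] by blast
  then have "R' b \<noteq> m" "e (R' b) \<noteq> 0" unfolding e' by (auto split: if_splits)
  moreover from this(2) have "R' b \<le> m" unfolding m using fin by simp
  ultimately show "R' b < m" by simp
qed

lemma decompose_tableau_mem:
  assumes R: "R \<in> tableaux lam mu e"
  defines "nu \<equiv> strip_base lam mu m R"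
  shows "nu \<in> strip_bases lam mu (e m)" and "restrict R (boxes nu mu) \<in> tableaux nu mu e'"
proof -
  have R_ssct: "R \<in> ssct k n lam mu" using R by (simp add: tableaux_def)
  note hyps = lam mu mu_le R_ssct tableau_le_Max[OF R]
  note base = strip_base_cylpar[OF hyps] strip_base_is_strip[OF hyps] strip_base_ge[OF hyps]
    boxes_largest_letter[OF hyps] boxes_strip_base_letters[OF hyps] restrict_strip_base_ssct[OF hyps]
  note base = base[folded nu_def]
  have "nu \<le> lam" using base(2) by (simp add: is_strip_def)
  have "int (e m) = int (card (boxes lam nu))"
    using tableau_weight[OF R, of m] base(4) by simp
  then show "nu \<in> strip_bases lam mu (e m)"
    using base(1-3) card_boxes[OF lam base(1) \<open>nu \<le> lam\<close>] by (simp add: strip_bases_def)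
  have "tab_wt k n nu mu (restrict R (boxes nu mu)) a = e' a" for a
  proof -
    have "{b \<in> boxes nu mu. restrict R (boxes nu mu) b = a} = {b \<in> boxes nu mu. R b = a}" by auto
    then have "tab_wt k n nu mu (restrict R (boxes nu mu)) a = card {b \<in> boxes nu mu. R b = a}"
      by (simp add: tab_wt_def)
    also have "\<dots> = e' a" using tableau_weight[OF R, of a] base(5)[of a] by (simp add: e')
    finally show ?thesis .
  qed
  then show "restrict R (boxes nu mu) \<in> tableaux nu mu e'"
    using base(6) by (simp add: tableaux_def fun_eq_iff)
qed

lemma extend_tableau_mem:
  assumes nu: "nu \<in> strip_bases lam mu (e m)" and R': "R' \<in> tableaux nu mu e'"
  shows "extend_tableau lam nu mu m R' \<in> tableaux lam mu e"
proof -
  have nu_C: "nu \<in> Cyl" and strip: "is_strip lam nu" and mu_nu: "mu \<le> nu"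
    and size: "skew_size lam nu = int (e m)" using nu by (auto simp: strip_bases_def)
  have R'_ssct: "R' \<in> ssct k n nu mu" using R' by (simp add: tableaux_def)
  note hyps = lam nu_C mu mu_nu strip R'_ssct tableau_less_Max[OF nu_C R']
  have "card (boxes lam nu) = e m"
    using card_boxes[OF lam nu_C] strip size by (simp add: is_strip_def)
  then have "tab_wt k n lam mu (extend_tableau lam nu mu m R') a = e a" for a
    using extend_tableau_letters[OF hyps, of a] tableau_weight[OF R', of a]
    by (cases "a = m") (simp_all add: tab_wt_def e')
  then show ?thesis using extend_tableau_ssct[OF hyps] by (simp add: tableaux_def fun_eq_iff)
qed

lemma extend_decompose_tableau:
  assumes R: "R \<in> tableaux lam mu e"
  shows "extend_tableau lam (strip_base lam mu m R) mu m (restrict R (boxes (strip_base lam mu m R) mu)) = R"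
proof -
  have R_ssct: "R \<in> ssct k n lam mu" using R by (simp add: tableaux_def)
  note hyps = lam mu mu_le R_ssct tableau_le_Max[OF R]
  have "strip_base lam mu m R \<le> lam" using strip_base_is_strip[OF hyps] by (simp add: is_strip_def)
  then show ?thesis
    using ssct_extensional[OF R_ssct] boxes_largest_letter[OF hyps]
      boxes_split(1)[OF lam mu strip_base_cylpar[OF hyps] strip_base_ge[OF hyps]]
    by (auto simp: fun_eq_iff extend_tableau_def extensional_def)
qed

lemma card_tableaux_branching:
  "card (tableaux lam mu e) = (\<Sum>nu\<in>strip_bases lam mu (e m). card (tableaux nu mu e'))"
proof -
  let ?S = "Sigma (strip_bases lam mu (e m)) (\<lambda>nu. tableaux nu mu e')"
  let ?F = "\<lambda>R. (strip_base lam mu m R, restrict R (boxes (strip_base lam mu m R) mu))"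
  let ?G = "\<lambda>(nu, R'). extend_tableau lam nu mu m R'"
  have "bij_betw ?F (tableaux lam mu e) ?S"
  proof (rule bij_betw_byWitness[where f' = ?G])
    show "\<forall>R\<in>tableaux lam mu e. ?G (?F R) = R" using extend_decompose_tableau by simp
    show "\<forall>p\<in>?S. ?F (?G p) = p"
    proof
      fix p assume "p \<in> ?S"
      then obtain nu R' where p: "p = (nu, R')" and "nu \<in> strip_bases lam mu (e m)"
        and R': "R' \<in> tableaux nu mu e'" by auto
      then have "nu \<in> Cyl" "mu \<le> nu" "is_strip lam nu" "R' \<in> ssct k n nu mu"
        by (auto simp: tableaux_def strip_bases_def)
      note hyps = lam this(1) mu this(2-4) tableau_less_Max[OF this(1) R']
      show "?F (?G p) = p"
        using strip_base_extend_tableau[OF hyps] restrict_extend_tableau[OF hyps] p by simp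
    qed
    show "?F ` tableaux lam mu e \<subseteq> ?S" using decompose_tableau_mem by auto
    show "?G ` ?S \<subseteq> tableaux lam mu e" using extend_tableau_mem by auto
  qed
  then have "card (tableaux lam mu e) = card ?S" by (rule bij_betw_same_card)
  also have "\<dots> = (\<Sum>nu\<in>strip_bases lam mu (e m). card (tableaux nu mu e'))"
  proof (rule card_SigmaI[OF finite_strip_bases])
    have "finite {a. e' a \<noteq> 0}" using fin by (rule rev_finite_subset) (auto simp: e')
    then show "\<forall>nu\<in>strip_bases lam mu (e m). finite (tableaux nu mu e')"
      using finite_tableaux mu by (auto simp: strip_bases_def)
  qed
  finally show ?thesis .
qed

end

lemma schur_branching:
  fixes e :: "'a::linorder \<Rightarrow> nat"
  assumes fin: "finite {a. e a \<noteq> 0}" and m: "m = Max {a. e a \<noteq> 0}"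
  shows "schur e = kernel_comp (strip (e m)) (schur (e(m := 0)))"
proof (intro ext)
  fix lam mu
  have support: "lam \<in> Cyl \<and> mu \<in> Cyl \<and> mu \<le> lam \<and> nu \<in> strip_bases lam mu (e m)"
    if "strip (e m) lam nu * schur (e(m := 0)) nu mu \<noteq> 0" for nu
  proof -
    have "strip (e m) lam nu \<noteq> 0" "schur (e(m := 0)) nu mu \<noteq> 0" using that by auto
    then have "lam \<in> Cyl" "nu \<in> Cyl" "is_strip lam nu" "skew_size lam nu = int (e m)"
      "mu \<in> Cyl" "mu \<le> nu"
      using schur_nonzeroD[of "e(m := 0)" nu mu] by (auto simp: strip_def split: if_splits)
    moreover have "mu \<le> lam" using calculation(3,6) unfolding is_strip_def by (blast intro: order_trans)
    ultimately show ?thesis by (simp add: strip_bases_def)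
  qed
  show "schur e lam mu = kernel_comp (strip (e m)) (schur (e(m := 0))) lam mu"
  proof (cases "lam \<in> Cyl \<and> mu \<in> Cyl \<and> mu \<le> lam")
    case True
    then have C: "lam \<in> Cyl" "mu \<in> Cyl" "mu \<le> lam" by auto
    have "kernel_comp (strip (e m)) (schur (e(m := 0))) lam mu
        = (\<Sum>nu\<in>strip_bases lam mu (e m). strip (e m) lam nu * schur (e(m := 0)) nu mu)"
      unfolding kernel_comp_def using support finite_strip_bases
      by (intro Sum_any.expand_superset) auto
    also have "\<dots> = (\<Sum>nu\<in>strip_bases lam mu (e m). card (tableaux nu mu (e(m := 0))))"
      using C by (intro sum.cong) (auto simp: strip_def schur_def strip_bases_def)
    also have "\<dots> = schur e lam mu"
      using card_tableaux_branching[OF C fin m refl] C by (simp add: schur_def)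
    finally show ?thesis by simp
  next
    case False
    then have "strip (e m) lam nu * schur (e(m := 0)) nu mu = 0" for nu using support by blast
    then have "kernel_comp (strip (e m)) (schur (e(m := 0))) lam mu = 0"
      by (simp add: kernel_comp_def fun_eq_iff)
    then show ?thesis using False by (auto simp: schur_def)
  qed
qed

lemma schur_infinite_support: "infinite {a. e a \<noteq> 0} \<Longrightarrow> schur e = (\<lambda>_ _. 0)"
  using schur_nonzeroD(5) by blast

lemma kernels_commute_strip_schur: "kernels_commute (strip p) (schur f)"
proof (cases "finite {a. f a \<noteq> 0}")
  case True
  then show ?thesis
  proof (induction f rule: finite_support_induct_Max)
    case zero
    show ?case
      unfolding schur_zero_weight by (rule kernels_commute_diag) (auto simp: strip_def split: if_splits)
  next
    case (remove_Max f)
    show ?case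
      unfolding schur_branching[OF remove_Max.hyps(1) refl]
      by (intro kernels_commute_comp kernels_commute_strip remove_Max.IH
          locally_finite_strip locally_finite_schur)
  qed
qed (simp add: schur_infinite_support kernels_commute_def)

lemma kernels_commute_schur: "kernels_commute (schur e) (schur f)"
proof (cases "finite {a. e a \<noteq> 0}")
  case True
  then show ?thesis
  proof (induction e rule: finite_support_induct_Max)
    case zero
    show ?case unfolding schur_zero_weight
      by (intro kernels_commute_sym[OF kernels_commute_diag]) (use schur_nonzeroD in blast)
  next
    case (remove_Max e)
    have "kernels_commute (schur f) (kernel_comp (strip (e (Max {a. e a \<noteq> 0})))
        (schur (e(Max {a. e a \<noteq> 0} := 0))))"
      by (intro kernels_commute_comp kernels_commute_sym[OF kernels_commute_strip_schur]
          kernels_commute_sym[OF remove_Max.IH] locally_finite_strip locally_finite_schur)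
    then show ?case
      unfolding schur_branching[OF remove_Max.hyps(1) refl] by (rule kernels_commute_sym)
  qed
qed (simp add: schur_infinite_support kernels_commute_def)

lemma schur_eq_cyl_schur:
  "schur e lam mu = (if lam \<in> Cyl \<and> mu \<in> Cyl \<and> mu \<le> lam then cyl_schur k n lam mu e else 0)"
  by (simp add: schur_def cyl_schur_def tableaux_def)

lemma cyl_schur_cauchy_coeff:
  fixes e f :: "'a::linorder \<Rightarrow> nat"
  assumes alpha: "alpha \<in> Cyl" and beta: "beta \<in> Cyl"
  shows "finite {mu. mu \<in> cylpar k n \<and> mu \<le> alpha \<and> mu \<le> beta \<and>
                 cyl_schur k n alpha mu e * cyl_schur k n beta mu f \<noteq> 0}
       \<and> finite {lam. lam \<in> cylpar k n \<and> alpha \<le> lam \<and> beta \<le> lam \<and>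
                 cyl_schur k n lam beta e * cyl_schur k n lam alpha f \<noteq> 0}
       \<and> (\<Sum>mu | mu \<in> cylpar k n \<and> mu \<le> alpha \<and> mu \<le> beta \<and>
                 cyl_schur k n alpha mu e * cyl_schur k n beta mu f \<noteq> 0.
             cyl_schur k n alpha mu e * cyl_schur k n beta mu f)
         = (\<Sum>lam | lam \<in> cylpar k n \<and> alpha \<le> lam \<and> beta \<le> lam \<and>
                 cyl_schur k n lam beta e * cyl_schur k n lam alpha f \<noteq> 0.
             cyl_schur k n lam beta e * cyl_schur k n lam alpha f)"
proof -
  have lhs: "{mu. mu \<in> cylpar k n \<and> mu \<le> alpha \<and> mu \<le> beta \<and>
                 cyl_schur k n alpha mu e * cyl_schur k n beta mu f \<noteq> 0}
      = {mu. schur e alpha mu * schur f beta mu \<noteq> 0}"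
    using alpha beta by (auto simp: schur_eq_cyl_schur)
  have rhs: "{lam. lam \<in> cylpar k n \<and> alpha \<le> lam \<and> beta \<le> lam \<and>
                 cyl_schur k n lam beta e * cyl_schur k n lam alpha f \<noteq> 0}
      = {lam. schur e lam beta * schur f lam alpha \<noteq> 0}"
    using alpha beta by (auto simp: schur_eq_cyl_schur)
  have "finite {mu. schur e alpha mu \<noteq> 0}" "finite {lam. schur e lam beta \<noteq> 0}"
    using locally_finite_schur[of e] by (auto simp: locally_finite_kernel_def)
  then have finite: "finite {mu. schur e alpha mu * schur f beta mu \<noteq> 0}"
    "finite {lam. schur e lam beta * schur f lam alpha \<noteq> 0}"
    by (auto elim: rev_finite_subset)
  have "(\<Sum>mu | mu \<in> cylpar k n \<and> mu \<le> alpha \<and> mu \<le> beta \<and>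
                 cyl_schur k n alpha mu e * cyl_schur k n beta mu f \<noteq> 0.
             cyl_schur k n alpha mu e * cyl_schur k n beta mu f)
      = (\<Sum>mu. schur e alpha mu * schur f beta mu)"
    unfolding lhs Sum_any.expand_set by (rule sum.cong) (auto simp: schur_eq_cyl_schur split: if_splits)
  also have "\<dots> = (\<Sum>lam. schur e lam beta * schur f lam alpha)"
    using kernels_commute_schur[of e f] unfolding kernels_commute_def by blast
  also have "\<dots> = (\<Sum>lam | lam \<in> cylpar k n \<and> alpha \<le> lam \<and> beta \<le> lam \<and>
                 cyl_schur k n lam beta e * cyl_schur k n lam alpha f \<noteq> 0.
             cyl_schur k n lam beta e * cyl_schur k n lam alpha f)"
    unfolding rhs Sum_any.expand_set by (rule sum.cong) (auto simp: schur_eq_cyl_schur split: if_splits)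
  finally show ?thesis unfolding lhs rhs using finite by blast
qed

end

theorem mainTheorem2:
  fixes k n :: int and alpha beta :: "int \<Rightarrow> int" and e f :: "'a::linorder \<Rightarrow> nat"
  assumes "1 \<le> k" and "k < n"
    and "alpha \<in> cylpar k n" and "beta \<in> cylpar k n"
  shows "finite {mu. mu \<in> cylpar k n \<and> mu \<le> alpha \<and> mu \<le> beta \<and>
                 cyl_schur k n alpha mu e * cyl_schur k n beta mu f \<noteq> 0}
       \<and> finite {lam. lam \<in> cylpar k n \<and> alpha \<le> lam \<and> beta \<le> lam \<and>
                 cyl_schur k n lam beta e * cyl_schur k n lam alpha f \<noteq> 0}
       \<and> (\<Sum>mu | mu \<in> cylpar k n \<and> mu \<le> alpha \<and> mu \<le> beta \<and>
                 cyl_schur k n alpha mu e * cyl_schur k n beta mu f \<noteq> 0.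
             cyl_schur k n alpha mu e * cyl_schur k n beta mu f)
         = (\<Sum>lam | lam \<in> cylpar k n \<and> alpha \<le> lam \<and> beta \<le> lam \<and>
                 cyl_schur k n lam beta e * cyl_schur k n lam alpha f \<noteq> 0.
             cyl_schur k n lam beta e * cyl_schur k n lam alpha f)"
proof -
  interpret cylindric k n using assms(1) by unfold_locales
  show ?thesis using assms(3,4) by (rule cyl_schur_cauchy_coeff)
qed

end
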